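(* Let $p_1,p_2\ge 5$ be distinct primes, $\mathbb{K}_1=\mathbb{Q}(\zeta_{p_1}+\zeta_{p_1}^{-1})$, $\mathbb{K}_2=\mathbb{Q}(\zeta_{p_2}+\zeta_{p_2}^{-1})$, $e_i=\zeta_{p_1}^i+\zeta_{p_1}^{-i}$, $b_j=\zeta_{p_2}^j+\zeta_{p_2}^{-j}$, $n_1=\frac{p_1-1}{2}$, $n_2=\frac{p_2-1}{2}$, $n=n_1n_2$. Let $\mathbb{K}=\mathbb{K}_1\mathbb{K}_2$ and let $\mathcal{I}\subseteq\mathcal{O}_{\mathbb{K}}$ be the $\mathbb{Z}$-module with $\mathbb{Z}$-basis $$\gamma_1=\{e_1b_1,\dots,e_1b_{n_2},\;e_2b_1,\dots,e_2b_{n_2},\;\dots,\;e_{n_1}b_1,\dots,e_{n_1}b_{n_2-1},\,2e_{n_1}b_{n_2}\},$$ i.e. all products $e_ib_j$ ($1\le i\le n_1$, $1\le j\le n_2$) except that $e_{n_1}b_{n_2}$ is replaced by $2e_{n_1}b_{n_2}$. Let $\alpha=(2-e_1)(2-b_1)$. Then $\frac{1}{\sqrt{p_1p_2}}\sigma_\alpha(\mathcal{I})\subseteq\mathbb{R}^n$ is a rotated $D_n$-lattice.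
   Context: $\zeta_m=e^{2\pi i/m}$. $\mathbb{K}$ is totally real Galois with Galois group $\{\sigma_1,\dots,\sigma_n\}$; $\sigma_\alpha(x)=(\sqrt{\sigma_1(\alpha)}\sigma_1(x),\dots,\sqrt{\sigma_n(\alpha)}\sigma_n(x))$. $D_n=\{(x_1,\dots,x_n)\in\mathbb{Z}^n:\sum x_i\text{ even}\}$; a rotated $D_n$-lattice is $R(D_n)$ for an orthogonal linear map $R$ of $\mathbb{R}^n$. *)

theory Defs
  imports Complex_Main "HOL-Computational_Algebra.Primes"
begin

definition zeta :: "nat \<Rightarrow> complex" where
  "zeta m = exp (2 * of_real pi * \<i> / of_nat m)"

text \<open>cyc p k = zeta_p^k + zeta_p^(-k); e_i = cyc p1 i, b_j = cyc p2 j\<close>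
definition cyc :: "nat \<Rightarrow> nat \<Rightarrow> complex" where
  "cyc p k = zeta p ^ k + inverse (zeta p) ^ k"

text \<open>Index set {1..n1} x {1..n2}: it indexes both the basis gamma_1 (pairs (i,j))
  and the Galois group of K = K1 K2 (pairs (a,c), the automorphism sending
  zeta_p1 + zeta_p1^-1 to zeta_p1^a + zeta_p1^-a and zeta_p2 + zeta_p2^-1 to
  zeta_p2^c + zeta_p2^-c), hence also the coordinates of R^n.\<close>
definition gidx :: "nat \<Rightarrow> nat \<Rightarrow> (nat \<times> nat) set" where
  "gidx p1 p2 = {1..(p1 - 1) div 2} \<times> {1..(p2 - 1) div 2}"

text \<open>Coefficient of e_i b_j in the basis gamma_1 (2 for the last element).\<close>
definition gcoef :: "nat \<Rightarrow> nat \<Rightarrow> nat \<times> nat \<Rightarrow> int" where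
  "gcoef p1 p2 ij = (if ij = ((p1 - 1) div 2, (p2 - 1) div 2) then 2 else 1)"

text \<open>Image under the Galois automorphism (a,c) of the element
  x = sum m(i,j) * gcoef(i,j) * e_i b_j of the module I.\<close>
definition gal_elem :: "nat \<Rightarrow> nat \<Rightarrow> nat \<times> nat \<Rightarrow> (nat \<times> nat \<Rightarrow> int) \<Rightarrow> complex" where
  "gal_elem p1 p2 ac m = (\<Sum>ij\<in>gidx p1 p2.
      of_int (m ij * gcoef p1 p2 ij) * cyc p1 (fst ac * fst ij) * cyc p2 (snd ac * snd ij))"

definition gal_alpha :: "nat \<Rightarrow> nat \<Rightarrow> nat \<times> nat \<Rightarrow> complex" where
  "gal_alpha p1 p2 ac = (2 - cyc p1 (fst ac)) * (2 - cyc p2 (snd ac))"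

text \<open>The set (1/sqrt(p1 p2)) sigma_alpha(I) as vectors indexed by gidx (zero outside).
  All values are real; Re just passes to the real type.\<close>
definition twisted_lattice :: "nat \<Rightarrow> nat \<Rightarrow> (nat \<times> nat \<Rightarrow> real) set" where
  "twisted_lattice p1 p2 = range (\<lambda>m :: nat \<times> nat \<Rightarrow> int. (\<lambda>ac.
      if ac \<in> gidx p1 p2 then
        (1 / sqrt (real (p1 * p2))) * sqrt (Re (gal_alpha p1 p2 ac)) * Re (gal_elem p1 p2 ac m)
      else 0))"

definition Dlat :: "'i set \<Rightarrow> ('i \<Rightarrow> real) set" where
  "Dlat S = {(\<lambda>k. if k \<in> S then real_of_int (z k) else 0) | z. even (\<Sum>k\<in>S. z k)}"

definition supported :: "'i set \<Rightarrow> ('i \<Rightarrow> real) \<Rightarrow> bool" where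
  "supported S x \<longleftrightarrow> (\<forall>k. k \<notin> S \<longrightarrow> x k = 0)"

definition orthogonal_on :: "'i set \<Rightarrow> (('i \<Rightarrow> real) \<Rightarrow> ('i \<Rightarrow> real)) \<Rightarrow> bool" where
  "orthogonal_on S R \<longleftrightarrow>
     (\<forall>x. supported S x \<longrightarrow> supported S (R x)) \<and>
     (\<forall>x y. supported S x \<longrightarrow> supported S y \<longrightarrow> R (\<lambda>k. x k + y k) = (\<lambda>k. R x k + R y k)) \<and>
     (\<forall>x c. supported S x \<longrightarrow> R (\<lambda>k. c * x k) = (\<lambda>k. c * R x k)) \<and>
     (\<forall>x y. supported S x \<longrightarrow> supported S y \<longrightarrow>
        (\<Sum>k\<in>S. R x k * R y k) = (\<Sum>k\<in>S. x k * y k))"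

end

theory Submission
  imports Defs "HOL-Analysis.Complex_Transcendental" "HOL-Library.Product_Order"
begin

text \<open>
  For odd \<open>p = 2n + 1\<close> let \<open>e(a) = \<zeta>\<^sup>a + \<zeta>\<^sup>-\<^sup>a\<close> and let \<open>T k a\<close> be the tail sum of the \<open>e(a i)\<close>
  over \<open>k \<le> i \<le> n\<close>. The key identity is \<open>\<Sum>\<^sub>a (2 - e(a)) T k a T k' a = p\<close> if \<open>k = k'\<close> and
  \<open>0\<close> otherwise: with \<open>w = \<zeta>\<^sup>a\<close> one has \<open>2 - e(a) = (1 - w)(1 - w\<^sup>-\<^sup>1)\<close>, each factor telescopes
  one tail sum, and what remains is a difference of two complete sums of \<open>p\<close>-th roots of unity.
  So the matrix \<open>\<surd>((2 - e(a))/p) T k a\<close> is orthogonal, and so is its tensor product for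
  \<open>p\<^sub>1\<close> and \<open>p\<^sub>2\<close>.

  The product of tails \<open>T k a T l c\<close> sums the \<open>e\<^sub>i b\<^sub>j\<close> (conjugated by \<open>(a, c)\<close>) over all
  \<open>(i, j) \<ge> (k, l)\<close>, so this orthogonal map sends an integer vector \<open>z\<close> to
  \<open>\<sigma>\<^sub>\<alpha>(\<Sum> Z\<^sub>i\<^sub>j e\<^sub>i b\<^sub>j)/\<surd>(p\<^sub>1 p\<^sub>2)\<close>, where \<open>Z\<^sub>i\<^sub>j\<close> is the sum of the \<open>z\<^sub>k\<^sub>l\<close> over \<open>(k, l) \<le> (i, j)\<close>.
  These partial sums are a bijection of \<open>\<int>\<^sup>n\<close> whose last entry is the total sum of \<open>z\<close>; hence
  \<open>z \<in> D\<^sub>n\<close> exactly when the coefficient of \<open>e\<^sub>n\<^sub>1 b\<^sub>n\<^sub>2\<close> is even, which is membership of the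
  image in \<open>\<sigma>\<^sub>\<alpha>(\<I>)/\<surd>(p\<^sub>1 p\<^sub>2)\<close>.
\<close>

section \<open>Sums of roots of unity\<close>

lemma zeta_power: "zeta p ^ m = exp (of_nat m * (2 * of_real pi * \<i> / of_nat p))"
  unfolding zeta_def by (metis exp_of_nat_mult times_divide_eq_right)

lemma zeta_power_eq_1_iff:
  assumes "p > 0"
  shows "zeta p ^ m = 1 \<longleftrightarrow> p dvd m"
proof
  assume "p dvd m"
  then obtain q where "m = p * q" by auto
  moreover have "zeta p ^ p = 1" using assms unfolding zeta_power by simp
  ultimately show "zeta p ^ m = 1" by (simp add: power_mult)
next
  assume "zeta p ^ m = 1"
  then obtain n :: int where "Im (of_nat m * (2 * of_real pi * \<i> / of_nat p)) = of_int (2 * n) * pi"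
    unfolding zeta_power exp_eq_1 by blast
  moreover have "Im (of_nat m * (2 * of_real pi * \<i> / of_nat p)) = 2 * pi * m / p"
    by (simp add: Im_divide power2_eq_square)
  ultimately have "2 * pi * m / p = 2 * n * pi" by simp
  then have "real m = real p * n" using assms by (simp add: field_simps)
  then have "int m = int p * n" by (metis of_int_eq_iff of_int_mult of_int_of_nat_eq)
  then show "p dvd m" by (metis dvd_triv_left int_dvd_int_iff)
qed

lemma zeta_nonzero [simp]: "zeta p \<noteq> 0"
  unfolding zeta_def by simp

lemma inverse_zeta: "inverse (zeta p) = cnj (zeta p)"
  unfolding zeta_def by (simp add: exp_cnj exp_minus[symmetric])

lemma cyc_real: "cyc p k = of_real (Re (cyc p k))"
  unfolding cyc_def inverse_zeta
  by (simp add: complex_eq_iff complex_cnj_power[symmetric] del: complex_cnj_power)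

lemma Im_cyc [simp]: "Im (cyc p k) = 0"
  by (subst cyc_real) simp

lemma Re_cyc_le_2: "Re (cyc p k) \<le> 2"
proof -
  have "norm (zeta p) = 1" unfolding zeta_def by simp
  then have "Re (zeta p ^ k) \<le> 1" by (metis complex_Re_le_cmod norm_power power_one)
  then show ?thesis
    unfolding cyc_def inverse_zeta by (simp add: complex_cnj_power[symmetric] del: complex_cnj_power)
qed

lemma sum_zeta_power_mult:
  assumes "p > 0"
  shows "(\<Sum>a<p. zeta p ^ (a * m)) = (if p dvd m then of_nat p else 0)"
proof (cases "p dvd m")
  case True
  then have "zeta p ^ (a * m) = 1" for a
    using zeta_power_eq_1_iff[OF assms] by simp
  with True show ?thesis by simp
next
  case False
  let ?w = "zeta p ^ m"
  have "?w \<noteq> 1" using zeta_power_eq_1_iff[OF assms] False by simp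
  moreover have "?w ^ p = 1"
    using zeta_power_eq_1_iff[OF assms, of "m * p"] by (simp add: power_mult[symmetric])
  ultimately have "(\<Sum>a<p. ?w ^ a) = 0" using geometric_sum[of ?w p] by simp
  with False show ?thesis by (simp add: power_mult[symmetric] mult.commute)
qed

lemma sum_cyc_mult:
  assumes p: "p = 2 * n + 1"
  shows "(\<Sum>a=1..n. cyc p (a * m)) = (if p dvd m then of_nat p - 1 else -1)"
proof -
  let ?z = "zeta p"
  have inverse_power: "inverse ?z ^ (a * m) = ?z ^ ((p - a) * m)" if "a \<le> p" for a
  proof -
    have "?z ^ (a * m) * ?z ^ ((p - a) * m) = ?z ^ (p * m)"
      using that by (simp add: power_add[symmetric] add_mult_distrib[symmetric])
    also have "\<dots> = 1" using zeta_power_eq_1_iff[of p "p * m"] p by (simp del: mult_Suc)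
    finally show ?thesis by (metis inverse_unique power_inverse)
  qed
  have "(\<Sum>a=1..n. cyc p (a * m)) = (\<Sum>a=1..n. ?z ^ (a * m)) + (\<Sum>a=1..n. ?z ^ ((p - a) * m))"
    unfolding cyc_def using inverse_power p by (simp add: sum.distrib)
  also have "(\<Sum>a=1..n. ?z ^ ((p - a) * m)) = (\<Sum>b=n+1..n+n. ?z ^ (b * m))"
    by (rule sum.reindex_bij_witness[where i="\<lambda>b. p - b" and j="\<lambda>a. p - a"]) (auto simp: p)
  also have "(\<Sum>a=1..n. ?z ^ (a * m)) + \<dots> = (\<Sum>a=1..n+n. ?z ^ (a * m))"
    by (rule sum.ub_add_nat[symmetric]) simp
  also have "\<dots> = (\<Sum>a<p. ?z ^ (a * m)) - 1"
  proof -
    have "(\<Sum>a<p. ?z ^ (a * m)) = (\<Sum>a<Suc (n + n). ?z ^ (a * m))"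
      using p by (simp only: mult_2 Suc_eq_plus1)
    also have "\<dots> = 1 + (\<Sum>a<n + n. ?z ^ (Suc a * m))"
      by (subst sum.lessThan_Suc_shift) simp
    also have "(\<Sum>a<n + n. ?z ^ (Suc a * m)) = (\<Sum>a=1..n + n. ?z ^ (a * m))"
      using sum.atLeast1_atMost_eq[of "\<lambda>a. ?z ^ (a * m)" "n + n"] by simp
    finally show ?thesis by simp
  qed
  also have "\<dots> = (if p dvd m then of_nat p - 1 else -1)"
    using sum_zeta_power_mult[of p m] p by simp
  finally show ?thesis .
qed

section \<open>Orthogonality of the tail sums\<close>

lemma power_mult_power_inverse:
  fixes w v :: "'a::comm_monoid_mult"
  assumes "w * v = 1"
  shows "w ^ a * v ^ b = (if b \<le> a then w ^ (a - b) else v ^ (b - a))"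
proof (cases "b \<le> a")
  case True
  then have "w ^ a = w ^ (a - b) * w ^ b" by (simp flip: power_add)
  then have "w ^ a * v ^ b = w ^ (a - b) * (w * v) ^ b" by (simp add: power_mult_distrib mult_ac)
  with True assms show ?thesis by simp
next
  case False
  then have "v ^ b = v ^ (b - a) * v ^ a" by (simp flip: power_add)
  then have "w ^ a * v ^ b = v ^ (b - a) * (w * v) ^ a" by (simp add: power_mult_distrib mult_ac)
  with False assms show ?thesis by simp
qed

lemma sum_power_tail_telescope:
  fixes w v :: "'a::comm_ring_1"
  assumes wv: "w * v = 1" and w: "w ^ (2 * n + 1) = 1" and k: "1 \<le> k" "k \<le> n"
  shows "(1 - w) * (\<Sum>i=k..n. w ^ i + v ^ i) = w ^ k - v ^ (k - 1)"
proof -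
  define f where "f i = v ^ (i - 1) - w ^ i" for i
  have "(1 - w) * (w ^ i + v ^ i) = f (Suc i) - f i" if "1 \<le> i" for i
  proof -
    obtain j where j: "i = Suc j" using \<open>1 \<le> i\<close> by (cases i) auto
    have "w * v ^ i = v ^ j" using wv by (simp add: j mult.assoc[symmetric])
    then show ?thesis unfolding f_def by (simp add: j algebra_simps)
  qed
  then have "(1 - w) * (\<Sum>i=k..n. w ^ i + v ^ i) = (\<Sum>i=k..n. f (Suc i) - f i)"
    unfolding sum_distrib_left using k by (intro sum.cong) auto
  also have "\<dots> = f (Suc n) - f k" using k by (intro sum_Suc_diff) simp
  also have "f (Suc n) = 0"
  proof -
    have "w ^ Suc n = w ^ Suc n * (w * v) ^ n" using wv by simp
    also have "\<dots> = w ^ (2 * n + 1) * v ^ n"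
      by (simp add: power_mult_distrib power_add[symmetric] mult_2 mult_2_right mult_ac)
    finally show ?thesis using w unfolding f_def by simp
  qed
  finally show ?thesis unfolding f_def by simp
qed

lemma sum_cyc_weighted_tails:
  assumes p: "p = 2 * n + 1" and k: "k \<in> {1..n}" and k': "k' \<in> {1..n}"
  shows "(\<Sum>a=1..n. (2 - cyc p a) * (\<Sum>i=k..n. cyc p (a * i)) * (\<Sum>i=k'..n. cyc p (a * i)))
     = (if k = k' then of_nat p else 0)"
proof -
  define d where "d = (if k \<le> k' then k' - k else k - k')"
  define s where "s = k + k' - 1"
  have summand: "(2 - cyc p a) * (\<Sum>i=k..n. cyc p (a * i)) * (\<Sum>i=k'..n. cyc p (a * i))
      = cyc p (a * d) - cyc p (a * s)" for a
  proof -
    define w where "w = zeta p ^ a"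
    define v where "v = inverse (zeta p) ^ a"
    have wv: "w * v = 1" and vw: "v * w = 1"
      unfolding w_def v_def by (simp_all add: power_mult_distrib[symmetric])
    have "zeta p ^ (a * p) = 1"
      using zeta_power_eq_1_iff[of p "a * p"] p by (metis dvd_triv_right zero_less_Suc Suc_eq_plus1)
    then have w: "w ^ (2 * n + 1) = 1" unfolding w_def p[symmetric] by (simp add: power_mult)
    then have v: "v ^ (2 * n + 1) = 1" using vw by (metis mult_1_right power_mult_distrib power_one)
    have cyc_wv: "cyc p (a * i) = w ^ i + v ^ i" for i
      unfolding cyc_def w_def v_def by (simp add: power_mult)
    have "2 - cyc p a = (1 - w) * (1 - v)" using wv cyc_wv[of 1] by (simp add: algebra_simps)
    moreover have "(\<Sum>i=k..n. cyc p (a * i)) = (\<Sum>i=k..n. w ^ i + v ^ i)"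
      and "(\<Sum>i=k'..n. cyc p (a * i)) = (\<Sum>i=k'..n. v ^ i + w ^ i)"
      by (simp_all add: cyc_wv add.commute)
    ultimately have "(2 - cyc p a) * (\<Sum>i=k..n. cyc p (a * i)) * (\<Sum>i=k'..n. cyc p (a * i))
       = ((1 - w) * (\<Sum>i=k..n. w ^ i + v ^ i)) * ((1 - v) * (\<Sum>i=k'..n. v ^ i + w ^ i))"
      by (simp only: mult_ac)
    also have "\<dots> = (w ^ k - v ^ (k - 1)) * (v ^ k' - w ^ (k' - 1))"
      using sum_power_tail_telescope[OF wv w] sum_power_tail_telescope[OF vw v] k k' by simp
    also have "\<dots> = w ^ k * v ^ k' + w ^ (k' - 1) * v ^ (k - 1) - w ^ k * w ^ (k' - 1) - v ^ (k - 1) * v ^ k'"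
      by (simp add: algebra_simps)
    also have "\<dots> = (w ^ d + v ^ d) - (w ^ s + v ^ s)"
      using k k' unfolding power_mult_power_inverse[OF wv] d_def s_def
      by (auto simp: power_add[symmetric])
    finally show ?thesis by (simp add: cyc_wv)
  qed
  have "\<not> p dvd s" using k k' p unfolding s_def by (auto dest: dvd_imp_le)
  moreover have "p dvd d \<longleftrightarrow> k = k'" using k k' p unfolding d_def by (auto dest: dvd_imp_le)
  ultimately show ?thesis unfolding summand sum_subtractf sum_cyc_mult[OF p] by simp
qed

definition cyc_weight :: "nat \<Rightarrow> nat \<Rightarrow> real" where
  "cyc_weight p a = sqrt ((2 - Re (cyc p a)) / p)"

definition cyc_tail :: "nat \<Rightarrow> nat \<Rightarrow> nat \<Rightarrow> real" where
  "cyc_tail p a k = (\<Sum>i=k..(p - 1) div 2. Re (cyc p (a * i)))"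

definition cyc_kernel :: "nat \<Rightarrow> nat \<Rightarrow> nat \<Rightarrow> real" where
  "cyc_kernel p a k = cyc_weight p a * cyc_tail p a k"

lemma cyc_weight_squared: "cyc_weight p a ^ 2 = (2 - Re (cyc p a)) / p"
  unfolding cyc_weight_def using Re_cyc_le_2[of p a] by simp

lemma cyc_kernel_orthonormal:
  assumes p: "p = 2 * n + 1" and "k \<in> {1..n}" "k' \<in> {1..n}"
  shows "(\<Sum>a=1..n. cyc_kernel p a k * cyc_kernel p a k') = (if k = k' then 1 else 0)"
proof -
  have n: "(p - 1) div 2 = n" using p by simp
  have "complex_of_real (\<Sum>a=1..n. (2 - Re (cyc p a)) * cyc_tail p a k * cyc_tail p a k')
     = (\<Sum>a=1..n. (2 - cyc p a) * (\<Sum>i=k..n. cyc p (a * i)) * (\<Sum>i=k'..n. cyc p (a * i)))"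
    unfolding cyc_tail_def n of_real_sum of_real_mult of_real_diff
    by (simp only: cyc_real[symmetric] of_real_numeral)
  also have "\<dots> = of_real (if k = k' then real p else 0)"
    using sum_cyc_weighted_tails[OF assms] by simp
  finally have "(\<Sum>a=1..n. (2 - Re (cyc p a)) * cyc_tail p a k * cyc_tail p a k')
      = (if k = k' then real p else 0)"
    by (simp only: of_real_eq_iff)
  moreover have "cyc_kernel p a k * cyc_kernel p a k'
      = cyc_weight p a ^ 2 * cyc_tail p a k * cyc_tail p a k'" for a
    unfolding cyc_kernel_def by (simp add: power2_eq_square mult_ac)
  ultimately show ?thesis
    using p by (simp add: cyc_weight_squared sum_divide_distrib[symmetric])
qed

section \<open>Kernel maps and dominance sums\<close>

definition kernel_map :: "'i set \<Rightarrow> ('i \<Rightarrow> 'i \<Rightarrow> real) \<Rightarrow> ('i \<Rightarrow> real) \<Rightarrow> 'i \<Rightarrow> real" where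
  "kernel_map S K x v = (if v \<in> S then \<Sum>u\<in>S. K v u * x u else 0)"

lemma kernel_map_cong:
  assumes "\<And>v u. v \<in> S \<Longrightarrow> u \<in> S \<Longrightarrow> K v u = K' v u" and "\<And>u. u \<in> S \<Longrightarrow> x u = x' u"
  shows "kernel_map S K x = kernel_map S K' x'"
  unfolding kernel_map_def using assms by (intro ext) simp

lemma orthogonal_on_kernel_map:
  fixes K :: "'i \<Rightarrow> 'i \<Rightarrow> real"
  assumes fin: "finite S"
    and orthonormal: "\<And>u u'. u \<in> S \<Longrightarrow> u' \<in> S \<Longrightarrow> (\<Sum>v\<in>S. K v u * K v u') = (if u = u' then 1 else 0)"
  shows "orthogonal_on S (kernel_map S K)"
  unfolding orthogonal_on_def
proof (intro conjI allI impI)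
  fix x y :: "'i \<Rightarrow> real"
  have "(\<Sum>v\<in>S. kernel_map S K x v * kernel_map S K y v)
      = (\<Sum>v\<in>S. \<Sum>u\<in>S. \<Sum>u'\<in>S. x u * y u' * (K v u * K v u'))"
    unfolding kernel_map_def by (simp add: sum_product mult_ac)
  also have "\<dots> = (\<Sum>u\<in>S. \<Sum>u'\<in>S. \<Sum>v\<in>S. x u * y u' * (K v u * K v u'))"
    by (subst sum.swap) (intro sum.cong refl sum.swap)
  also have "\<dots> = (\<Sum>u\<in>S. \<Sum>u'\<in>S. x u * y u' * (if u = u' then 1 else 0))"
    by (intro sum.cong refl) (simp add: sum_distrib_left[symmetric] orthonormal)
  also have "\<dots> = (\<Sum>u\<in>S. x u * y u)" using fin by (simp add: if_distrib cong: if_cong)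
  finally show "(\<Sum>v\<in>S. kernel_map S K x v * kernel_map S K y v) = (\<Sum>u\<in>S. x u * y u)" .
next
  fix x :: "'i \<Rightarrow> real"
  show "supported S (kernel_map S K x)"
    unfolding supported_def kernel_map_def by simp
next
  fix x y :: "'i \<Rightarrow> real"
  show "kernel_map S K (\<lambda>k. x k + y k) = (\<lambda>k. kernel_map S K x k + kernel_map S K y k)"
    unfolding kernel_map_def by (rule ext) (simp add: sum.distrib distrib_left)
next
  fix x :: "'i \<Rightarrow> real" and c :: real
  show "kernel_map S K (\<lambda>k. c * x k) = (\<lambda>k. c * kernel_map S K x k)"
    unfolding kernel_map_def by (rule ext) (simp add: sum_distrib_left mult_ac)
qed

lemma orthonormal_kernel_product:
  assumes K1: "\<And>k k'. k \<in> A \<Longrightarrow> k' \<in> A \<Longrightarrow> (\<Sum>a\<in>A. K1 a k * K1 a k') = (if k = k' then 1 else 0)"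
    and K2: "\<And>l l'. l \<in> B \<Longrightarrow> l' \<in> B \<Longrightarrow> (\<Sum>b\<in>B. K2 b l * K2 b l') = (if l = l' then 1 else 0)"
    and u: "u \<in> A \<times> B" and u': "u' \<in> A \<times> B"
  shows "(\<Sum>v\<in>A \<times> B. (K1 (fst v) (fst u) * K2 (snd v) (snd u)) * (K1 (fst v) (fst u') * K2 (snd v) (snd u')))
    = (if u = u' then 1 else (0::real))"
proof -
  have "(\<Sum>v\<in>A \<times> B. (K1 (fst v) (fst u) * K2 (snd v) (snd u)) * (K1 (fst v) (fst u') * K2 (snd v) (snd u')))
      = (\<Sum>a\<in>A. K1 a (fst u) * K1 a (fst u')) * (\<Sum>b\<in>B. K2 b (snd u) * K2 b (snd u'))"
    by (simp add: sum.cartesian_product sum_product split_def mult_ac)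
  also have "\<dots> = (if u = u' then 1 else 0)"
    using u u' by (simp add: K1 K2 mem_Times_iff prod_eq_iff)
  finally show ?thesis .
qed

definition dom_sum :: "'i::ord set \<Rightarrow> ('i \<Rightarrow> 'a::comm_monoid_add) \<Rightarrow> 'i \<Rightarrow> 'a" where
  "dom_sum S x w = (\<Sum>u\<in>{u\<in>S. u \<le> w}. x u)"

lemma kernel_map_dom_sum:
  assumes fin: "finite S"
    and K: "\<And>v u. v \<in> S \<Longrightarrow> u \<in> S \<Longrightarrow> K v u = (\<Sum>w\<in>{w\<in>S. u \<le> w}. E v w)"
  shows "kernel_map S K x = kernel_map S E (dom_sum S x)"
proof (rule ext)
  fix v
  have "(\<Sum>u\<in>S. K v u * x u) = (\<Sum>u\<in>S. \<Sum>w\<in>S. if u \<le> w then E v w * x u else 0)"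
    if "v \<in> S"
    using fin that
    by (intro sum.cong refl) (auto simp: K sum.inter_filter sum_distrib_right intro!: sum.cong)
  also have "\<dots> = (\<Sum>w\<in>S. \<Sum>u\<in>S. if u \<le> w then E v w * x u else 0)"
    by (rule sum.swap)
  also have "\<dots> = (\<Sum>w\<in>S. E v w * dom_sum S x w)"
    unfolding dom_sum_def using fin
    by (intro sum.cong refl) (simp add: sum.inter_filter sum_distrib_left if_distrib cong: if_cong)
  finally show "kernel_map S K x v = kernel_map S E (dom_sum S x) v"
    unfolding kernel_map_def by simp
qed

lemma sum_diff_pred_telescope:
  fixes f :: "nat \<Rightarrow> 'a::ab_group_add"
  shows "(\<Sum>k=1..n. f k - f (k - 1)) = f n - f 0"
  by (induction n) (auto simp: atLeastAtMostSuc_conv)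

lemma dom_sum_grid:
  fixes n1 n2 :: nat
  assumes "w \<in> {1..n1} \<times> {1..n2}"
  shows "dom_sum ({1..n1} \<times> {1..n2}) x w = (\<Sum>k=1..fst w. \<Sum>l=1..snd w. x (k, l))"
proof -
  have "{u \<in> {1..n1} \<times> {1..n2}. u \<le> w} = {1..fst w} \<times> {1..snd w}"
    using assms by (auto simp: less_eq_prod_def intro: order_trans)
  then show ?thesis unfolding dom_sum_def by (simp add: sum.cartesian_product)
qed

lemma dom_sum_grid_top:
  fixes n1 n2 :: nat
  shows "dom_sum ({1..n1} \<times> {1..n2}) x (n1, n2) = sum x ({1..n1} \<times> {1..n2})"
  unfolding dom_sum_def by (intro sum.cong) auto

lemma dom_sum_grid_surj:
  fixes n1 n2 :: nat and y :: "nat \<times> nat \<Rightarrow> 'a::ab_group_add"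
  obtains z where "\<And>w. w \<in> {1..n1} \<times> {1..n2} \<Longrightarrow> dom_sum ({1..n1} \<times> {1..n2}) z w = y w"
proof
  define Y where "Y k l = (if 1 \<le> k \<and> 1 \<le> l then y (k, l) else 0)" for k l
  \<comment> \<open>the two-dimensional finite difference of y, extended by zero to the axes\<close>
  define z where "z u = (Y (fst u) (snd u) - Y (fst u - 1) (snd u))
    - (Y (fst u) (snd u - 1) - Y (fst u - 1) (snd u - 1))" for u
  have Y_axes: "Y k 0 = 0" "Y 0 l = 0" for k l unfolding Y_def by simp_all
  have column: "(\<Sum>l=1..j. z (k, l)) = Y k j - Y (k - 1) j" for k j
    using sum_diff_pred_telescope[of "\<lambda>l. Y k l - Y (k - 1) l" j]
    unfolding z_def by (simp add: Y_axes)
  fix w assume w: "w \<in> {1..n1} \<times> {1..n2}"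
  have "dom_sum ({1..n1} \<times> {1..n2}) z w = (\<Sum>k=1..fst w. Y k (snd w) - Y (k - 1) (snd w))"
    unfolding dom_sum_grid[OF w] column ..
  also have "\<dots> = Y (fst w) (snd w)"
    using sum_diff_pred_telescope[of "\<lambda>k. Y k (snd w)" "fst w"] by (simp add: Y_axes)
  also have "\<dots> = y w" using w by (simp add: Y_def mem_Times_iff)
  finally show "dom_sum ({1..n1} \<times> {1..n2}) z w = y w" .
qed

lemma dom_sum_grid_even_image:
  fixes n1 n2 :: nat and F :: "(nat \<times> nat \<Rightarrow> int) \<Rightarrow> 'b"
  defines "S \<equiv> {1..n1} \<times> {1..n2}"
  assumes n: "1 \<le> n1" "1 \<le> n2"
    and F: "\<And>y y'. (\<And>w. w \<in> S \<Longrightarrow> y w = y' w) \<Longrightarrow> F y = F y'"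
  shows "(\<lambda>z. F (dom_sum S z)) ` {z. even (sum z S)}
    = range (\<lambda>m. F (\<lambda>w. m w * (if w = (n1, n2) then 2 else 1)))"
proof (intro equalityI subsetI)
  have top: "dom_sum S z (n1, n2) = sum z S" for z :: "nat \<times> nat \<Rightarrow> int"
    unfolding S_def by (rule dom_sum_grid_top)
  fix x assume "x \<in> (\<lambda>z. F (dom_sum S z)) ` {z. even (sum z S)}"
  then obtain z where x: "x = F (dom_sum S z)" and even: "even (sum z S)" by blast
  define m where "m w = (if w = (n1, n2) then dom_sum S z w div 2 else dom_sum S z w)" for w
  have "dom_sum S z = (\<lambda>w. m w * (if w = (n1, n2) then 2 else 1))"
    using even top[of z] unfolding m_def by (intro ext) simp
  then show "x \<in> range (\<lambda>m. F (\<lambda>w. m w * (if w = (n1, n2) then 2 else 1)))"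
    unfolding x by simp
next
  fix x assume "x \<in> range (\<lambda>m. F (\<lambda>w. m w * (if w = (n1, n2) then 2 else 1)))"
  then obtain m where x: "x = F (\<lambda>w. m w * (if w = (n1, n2) then 2 else 1))" by blast
  obtain z where z: "\<And>w. w \<in> S \<Longrightarrow> dom_sum S z w = m w * (if w = (n1, n2) then 2 else 1)"
    using dom_sum_grid_surj[of n1 n2 "\<lambda>w. m w * (if w = (n1, n2) then 2 else 1)"]
    unfolding S_def by blast
  have "(n1, n2) \<in> S" using n unfolding S_def by simp
  then have "sum z S = 2 * m (n1, n2)"
    using z[of "(n1, n2)"] dom_sum_grid_top[of n1 n2 z] unfolding S_def by simp
  moreover have "x = F (dom_sum S z)" unfolding x by (rule F) (simp only: z)
  ultimately show "x \<in> (\<lambda>z. F (dom_sum S z)) ` {z. even (sum z S)}" by auto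
qed

section \<open>The twisted lattice\<close>

text \<open>\<open>cyc_embed p\<^sub>1 p\<^sub>2 y\<close> is \<open>\<sigma>\<^sub>\<alpha>(\<Sum> y\<^sub>i\<^sub>j e\<^sub>i b\<^sub>j)/\<surd>(p\<^sub>1p\<^sub>2)\<close>, as a vector indexed by the Galois group.\<close>

definition cyc_embed :: "nat \<Rightarrow> nat \<Rightarrow> (nat \<times> nat \<Rightarrow> real) \<Rightarrow> nat \<times> nat \<Rightarrow> real" where
  "cyc_embed p1 p2 = kernel_map (gidx p1 p2) (\<lambda>v w.
     cyc_weight p1 (fst v) * cyc_weight p2 (snd v) * Re (cyc p1 (fst v * fst w)) * Re (cyc p2 (snd v * snd w)))"

definition cyc_rotation :: "nat \<Rightarrow> nat \<Rightarrow> (nat \<times> nat \<Rightarrow> real) \<Rightarrow> nat \<times> nat \<Rightarrow> real" where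
  "cyc_rotation p1 p2 = kernel_map (gidx p1 p2) (\<lambda>v u.
     cyc_kernel p1 (fst v) (fst u) * cyc_kernel p2 (snd v) (snd u))"

lemma twisted_lattice_eq_cyc_embed:
  "twisted_lattice p1 p2 = range (\<lambda>m. cyc_embed p1 p2 (\<lambda>w. of_int (m w * gcoef p1 p2 w)))"
proof -
  have weight: "1 / sqrt (real (p1 * p2)) * sqrt (Re (gal_alpha p1 p2 v))
      = cyc_weight p1 (fst v) * cyc_weight p2 (snd v)" for v
    by (simp add: gal_alpha_def cyc_weight_def real_sqrt_mult real_sqrt_divide)
  have elem: "Re (gal_elem p1 p2 v m) = (\<Sum>w\<in>gidx p1 p2.
      Re (cyc p1 (fst v * fst w)) * Re (cyc p2 (snd v * snd w)) * of_int (m w * gcoef p1 p2 w))" for v m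
    unfolding gal_elem_def Re_sum by (intro sum.cong refl) simp
  have "(\<lambda>v. if v \<in> gidx p1 p2 then
      1 / sqrt (real (p1 * p2)) * sqrt (Re (gal_alpha p1 p2 v)) * Re (gal_elem p1 p2 v m) else 0)
    = cyc_embed p1 p2 (\<lambda>w. of_int (m w * gcoef p1 p2 w))" for m
    unfolding cyc_embed_def kernel_map_def weight elem
    by (intro ext) (simp add: sum_distrib_left mult_ac)
  then show ?thesis unfolding twisted_lattice_def by simp
qed

lemma orthogonal_on_cyc_rotation:
  assumes "p1 = 2 * n1 + 1" and "p2 = 2 * n2 + 1"
  shows "orthogonal_on (gidx p1 p2) (cyc_rotation p1 p2)"
proof -
  have S: "gidx p1 p2 = {1..n1} \<times> {1..n2}" unfolding gidx_def assms by simp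
  show ?thesis
    unfolding cyc_rotation_def S
    by (intro orthogonal_on_kernel_map orthonormal_kernel_product
        cyc_kernel_orthonormal[OF assms(1)] cyc_kernel_orthonormal[OF assms(2)]) auto
qed

lemma cyc_rotation_eq_cyc_embed:
  assumes p1: "p1 = 2 * n1 + 1" and p2: "p2 = 2 * n2 + 1"
  shows "cyc_rotation p1 p2 x = cyc_embed p1 p2 (dom_sum (gidx p1 p2) x)"
proof -
  have S: "gidx p1 p2 = {1..n1} \<times> {1..n2}" unfolding gidx_def p1 p2 by simp
  have tail: "cyc_tail p a k = (\<Sum>i=k..n. Re (cyc p (a * i)))" if "p = 2 * n + 1" for p n a k
    unfolding cyc_tail_def that by simp
  have kernel: "cyc_kernel p1 (fst v) (fst u) * cyc_kernel p2 (snd v) (snd u)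
    = (\<Sum>w\<in>{w \<in> {1..n1} \<times> {1..n2}. u \<le> w}.
        cyc_weight p1 (fst v) * cyc_weight p2 (snd v) * Re (cyc p1 (fst v * fst w)) * Re (cyc p2 (snd v * snd w)))"
    if "u \<in> {1..n1} \<times> {1..n2}" for u v :: "nat \<times> nat"
  proof -
    let ?e = "\<lambda>i. cyc_weight p1 (fst v) * Re (cyc p1 (fst v * i))"
    let ?b = "\<lambda>j. cyc_weight p2 (snd v) * Re (cyc p2 (snd v * j))"
    have "{w \<in> {1..n1} \<times> {1..n2}. u \<le> w} = {fst u..n1} \<times> {snd u..n2}"
      using that by (auto simp: less_eq_prod_def)
    then have "(\<Sum>w\<in>{w \<in> {1..n1} \<times> {1..n2}. u \<le> w}.
        cyc_weight p1 (fst v) * cyc_weight p2 (snd v) * Re (cyc p1 (fst v * fst w)) * Re (cyc p2 (snd v * snd w)))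
      = (\<Sum>w\<in>{fst u..n1} \<times> {snd u..n2}. ?e (fst w) * ?b (snd w))"
      by (intro sum.cong) (simp_all add: mult_ac)
    also have "\<dots> = (\<Sum>i=fst u..n1. ?e i) * (\<Sum>j=snd u..n2. ?b j)"
      by (simp only: sum_product sum.cartesian_product split_def)
    also have "\<dots> = cyc_kernel p1 (fst v) (fst u) * cyc_kernel p2 (snd v) (snd u)"
      unfolding cyc_kernel_def tail[OF p1] tail[OF p2] by (simp add: sum_distrib_left)
    finally show ?thesis ..
  qed
  show ?thesis
    unfolding cyc_rotation_def cyc_embed_def S
    by (rule kernel_map_dom_sum) (simp_all only: kernel finite_SigmaI finite_atLeastAtMost)
qed

lemma cyc_rotation_image_Dlat:
  assumes "p1 = 2 * n1 + 1" and "p2 = 2 * n2 + 1"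
  defines "S \<equiv> gidx p1 p2"
  shows "cyc_rotation p1 p2 ` Dlat S
    = (\<lambda>z. cyc_embed p1 p2 (\<lambda>w. of_int (dom_sum S z w))) ` {z. even (sum z S)}"
proof -
  have "Dlat S = (\<lambda>z k. if k \<in> S then real_of_int (z k) else 0) ` {z. even (sum z S)}"
    unfolding Dlat_def by blast
  moreover have "dom_sum S (\<lambda>k. if k \<in> S then real_of_int (z k) else 0) = (\<lambda>w. of_int (dom_sum S z w))"
    for z
    unfolding dom_sum_def by (intro ext) simp
  ultimately show ?thesis
    unfolding cyc_rotation_eq_cyc_embed[OF assms(1,2)] S_def[symmetric] by (simp add: image_image)
qed

lemma prime_ge_5_obtain_odd:
  fixes p :: nat
  assumes "prime p" and "5 \<le> p"
  obtains n where "p = 2 * n + 1" and "1 \<le> n"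
proof -
  have "odd p" using assms prime_odd_nat by auto
  then obtain n where "p = 2 * n + 1" by (rule oddE)
  with assms(2) show ?thesis using that by simp
qed

theorem proposition3p7:
  fixes p1 p2 :: nat
  assumes "prime p1" and "prime p2" and "p1 \<ge> 5" and "p2 \<ge> 5" and "p1 \<noteq> p2"
  shows "\<exists>R. orthogonal_on (gidx p1 p2) R \<and> R ` Dlat (gidx p1 p2) = twisted_lattice p1 p2"
proof -
  obtain n1 where p1: "p1 = 2 * n1 + 1" and n1: "1 \<le> n1"
    using prime_ge_5_obtain_odd assms(1,3) by blast
  obtain n2 where p2: "p2 = 2 * n2 + 1" and n2: "1 \<le> n2"
    using prime_ge_5_obtain_odd assms(2,4) by blast
  have S: "gidx p1 p2 = {1..n1} \<times> {1..n2}" unfolding gidx_def p1 p2 by simp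
  have coef: "gcoef p1 p2 w = (if w = (n1, n2) then 2 else 1)" for w
    unfolding gcoef_def p1 p2 by simp
  have "cyc_rotation p1 p2 ` Dlat (gidx p1 p2)
      = (\<lambda>z. cyc_embed p1 p2 (\<lambda>w. of_int (dom_sum (gidx p1 p2) z w))) ` {z. even (sum z (gidx p1 p2))}"
    by (rule cyc_rotation_image_Dlat[OF p1 p2])
  also have "\<dots> = range (\<lambda>m. cyc_embed p1 p2 (\<lambda>w. of_int (m w * gcoef p1 p2 w)))"
    unfolding S coef using n1 n2
    by (intro dom_sum_grid_even_image) (auto simp: cyc_embed_def S intro: kernel_map_cong)
  also have "\<dots> = twisted_lattice p1 p2"
    by (rule twisted_lattice_eq_cyc_embed[symmetric])
  finally show ?thesis using orthogonal_on_cyc_rotation[OF p1 p2] by blast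
qed

end
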